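(* Let $r_1\ge\cdots\ge r_k\ge0$, let $M_1$ map $r_{1:k}=(r_1,\ldots,r_k)$ to $R_{1:k}=(R_1,\ldots,R_k)$ with $R_\tau=\sum_{j=1}^kr_j^\tau$, and let $M_2$ map $R_{1:k}$ to $t_{1:k}=(t_1,\ldots,t_k)$ defined by $t_0=1$, $t_1=R_1$, and $t_\tau=\sum_{j=1}^\tau\frac{(\tau-1)!}{(\tau-j)!}2^{j-1}R_jt_{\tau-j}$ for $\tau=2,\ldots,k$. Then: (1) The inverse $r_{1:k}=M_1^{-1}(R_{1:k})$ exists, i.e. $r_{1:k}$ is uniquely determined by $R_{1:k}$. Explicitly, let $a_k=R_1$ and $a_{k-j+1}=(R_j-\sum_{i=1}^{j-1}R_ia_{k-j+i+1})/j$ for $j=2,\ldots,k$, and let $A$ be the $k\times k$ matrix whose first $k-1$ rows are $[\,0_{k-1}\mid I_{k-1}\,]$ and whose last row is $(a_1,a_2,\ldots,a_k)$. Then $r_j$ is the $j$th largest modulus of the eigenvalues of $A$, $j=1,\ldots,k$. (2) The inverse $R_{1:k}=M_2^{-1}(t_{1:k})$ exists and is given by $R_1=t_1$ and $R_\tau=\frac{t_\tau}{(\tau-1)!2^{\tau-1}}-\sum_{j=1}^{\tau-1}\frac{t_{\tau-j}R_j}{(\tau-j)!2^{\tau-j}}$ for $\tau=2,\ldots,k$.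
   Context: $0_{k-1}$ denotes the zero column vector of length $k-1$ and $I_{k-1}$ the $(k-1)\times(k-1)$ identity matrix. In the paper, $r_1\ge\cdots\ge r_k$ are the odds of missing information $r_j=f_j/(1-f_j)$ where $f_1\ge\cdots\ge f_k$ are the eigenvalues (in $[0,1)$) of $I_{mis}I_{com}^{-1}$; $t_\tau$ is the $\tau$th moment of $\sum_j r_jU_j$ with $U_j\sim\chi^2_1$ independent. *)

theory Defs
  imports "Jordan_Normal_Form.Char_Poly" "HOL-Library.Multiset"
begin

text \<open>Vectors r, R, t of length k are represented as functions nat => real,
  only the entries with indices 1..k being relevant.\<close>

definition power_sum :: "nat \<Rightarrow> (nat \<Rightarrow> real) \<Rightarrow> nat \<Rightarrow> real" where
  "power_sum k r \<tau> = (\<Sum>j=1..k. r j ^ \<tau>)"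

fun moment_t :: "(nat \<Rightarrow> real) \<Rightarrow> nat \<Rightarrow> real" where
  "moment_t R 0 = 1"
| "moment_t R (Suc n) =
     (\<Sum>j\<in>{1..Suc n}. fact n / fact (Suc n - j) * 2 ^ (j - 1) * R j * moment_t R (Suc n - j))"

fun inv_M2 :: "(nat \<Rightarrow> real) \<Rightarrow> nat \<Rightarrow> real" where
  "inv_M2 t 0 = 0"
| "inv_M2 t (Suc n) =
     (if n = 0 then t 1
      else t (Suc n) / (fact n * 2 ^ n)
           - (\<Sum>j\<in>{1..n}. t (Suc n - j) * inv_M2 t j / (fact (Suc n - j) * 2 ^ (Suc n - j))))"

text \<open>Auxiliary sequence b_j = a_{k-j+1}: b_1 = R_1,
  b_j = (R_j - sum_{i=1}^{j-1} R_i b_{j-i}) / j.  Indeed a_{k-j+i+1} = b_{j-i}.\<close>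
fun coeff_b :: "(nat \<Rightarrow> real) \<Rightarrow> nat \<Rightarrow> real" where
  "coeff_b R 0 = 0"
| "coeff_b R (Suc n) =
     (if n = 0 then R 1
      else (R (Suc n) - (\<Sum>i\<in>{1..n}. R i * coeff_b R (Suc n - i))) / real (Suc n))"

definition coeff_a :: "nat \<Rightarrow> (nat \<Rightarrow> real) \<Rightarrow> nat \<Rightarrow> real" where
  "coeff_a k R m = coeff_b R (k + 1 - m)"

text \<open>The k x k matrix A (0-indexed): first k-1 rows [0_{k-1} | I_{k-1}],
  last row (a_1, ..., a_k); regarded as a complex matrix.\<close>
definition companion_A :: "nat \<Rightarrow> (nat \<Rightarrow> real) \<Rightarrow> complex mat" where
  "companion_A k R = mat k k (\<lambda>(i, j).
      if i < k - 1 then (if j = i + 1 then 1 else 0)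
      else complex_of_real (coeff_a k R (j + 1)))"

definition eigenvalue_mset :: "complex mat \<Rightarrow> complex multiset" where
  "eigenvalue_mset A = Abs_multiset (\<lambda>x. order x (char_poly A))"

definition eigen_moduli_desc :: "complex mat \<Rightarrow> real list" where
  "eigen_moduli_desc A = rev (sorted_list_of_multiset (image_mset cmod (eigenvalue_mset A)))"

definition jth_largest_eig_modulus :: "complex mat \<Rightarrow> nat \<Rightarrow> real" where
  "jth_largest_eig_modulus A j = eigen_moduli_desc A ! (j - 1)"

end

theory Submission
  imports Defs "HOL-Computational_Algebra.Polynomial_FPS"
begin

(* Let E(X) = prod_j (1 - r_j X). Differentiating gives E' = - E S with
   S(X) = sum_m R_(m+1) X^m, and comparing coefficients (Newton's identities) shows that the
   coefficients of E are, up to sign, given by the very recursion that defines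
   a_k, a_(k-1), ..., a_1. Hence the characteristic polynomial X^k - sum_m a_m X^(m-1) of the
   companion matrix A is the reflection of E, i.e. prod_j (X - r_j): the eigenvalues of A are
   r_1, ..., r_k with multiplicity, and for nonnegative decreasing r_j the j-th largest modulus
   is r_j. As A is built from R_1, ..., R_k alone, R determines r. Part (2) solves the
   recursion defining t_tau for its last summand R_tau t_0. *)

definition linear_factors_fps :: "('b \<Rightarrow> 'a::comm_ring_1) \<Rightarrow> 'b set \<Rightarrow> 'a fps" where
  "linear_factors_fps x J = (\<Prod>j\<in>J. 1 - fps_const (x j) * fps_X)"

definition power_sums_fps :: "('b \<Rightarrow> 'a::comm_ring_1) \<Rightarrow> 'b set \<Rightarrow> 'a fps" where
  "power_sums_fps x J = Abs_fps (\<lambda>m. \<Sum>j\<in>J. x j ^ Suc m)"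

lemma linear_factor_times_geometric_fps:
  "(1 - fps_const c * fps_X) * Abs_fps (\<lambda>m. c ^ Suc m) = fps_const (c::'a::comm_ring_1)"
proof (rule fps_ext)
  fix n
  show "fps_nth ((1 - fps_const c * fps_X) * Abs_fps (\<lambda>m. c ^ Suc m)) n = fps_nth (fps_const c) n"
    by (cases n) (simp_all add: algebra_simps)
qed

lemma linear_factors_fps_nth_0 [simp]: "fps_nth (linear_factors_fps x J) 0 = 1"
  unfolding linear_factors_fps_def
  by (induction J rule: infinite_finite_induct) simp_all

lemma fps_deriv_linear_factors_fps:
  assumes "finite J"
  shows "fps_deriv (linear_factors_fps x J) = - linear_factors_fps x J * power_sums_fps x J"
  using assms
proof (induction J rule: finite_induct)
  case empty
  then show ?case by (simp add: linear_factors_fps_def power_sums_fps_def fps_zero_def[symmetric])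
next
  case (insert a J)
  define L where "L = 1 - fps_const (x a) * fps_X"
  define G where "G = Abs_fps (\<lambda>m. x a ^ Suc m)"
  have E: "linear_factors_fps x (insert a J) = L * linear_factors_fps x J"
    using insert by (simp add: linear_factors_fps_def L_def)
  have S: "power_sums_fps x (insert a J) = G + power_sums_fps x J"
    using insert by (simp add: power_sums_fps_def G_def fps_plus_def)
  have "fps_deriv (linear_factors_fps x (insert a J))
      = - fps_const (x a) * linear_factors_fps x J + L * fps_deriv (linear_factors_fps x J)"
    by (simp add: E L_def)
  also have "\<dots> = - (L * G) * linear_factors_fps x J
                  - L * linear_factors_fps x J * power_sums_fps x J"
    unfolding insert.IH L_def G_def linear_factor_times_geometric_fps by (simp add: algebra_simps)
  also have "\<dots> = - linear_factors_fps x (insert a J) * power_sums_fps x (insert a J)"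
    by (simp add: E S algebra_simps)
  finally show ?case .
qed

lemma newton_identity:
  assumes "finite J"
  shows "of_nat (Suc m) * fps_nth (linear_factors_fps x J) (Suc m) =
           - (\<Sum>i\<le>m. fps_nth (linear_factors_fps x J) i * (\<Sum>j\<in>J. x j ^ (Suc m - i)))"
proof -
  have "fps_nth (fps_deriv (linear_factors_fps x J)) m =
      fps_nth (- linear_factors_fps x J * power_sums_fps x J) m"
    by (simp only: fps_deriv_linear_factors_fps[OF assms])
  then show ?thesis
    by (simp add: fps_mult_nth power_sums_fps_def sum_negf atLeast0AtMost Suc_diff_le mult.commute)
qed

lemma linear_factors_fps_nth_eq_coeff_b:
  assumes "1 \<le> m"
  shows "fps_nth (linear_factors_fps r {1..k}) m = - coeff_b (power_sum k r) m"
  using assms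
proof (induction m rule: less_induct)
  case (less m)
  define e where "e = fps_nth (linear_factors_fps r {1..k})"
  define R where "R = power_sum k r"
  obtain n where m: "m = Suc n" using less.prems by (cases m) auto
  have newton: "real (Suc n) * e (Suc n) = - (\<Sum>i\<le>n. e i * R (Suc n - i))"
    using newton_identity[of "{1..k}" n r] by (simp add: e_def R_def power_sum_def)
  show ?case
  proof (cases "n = 0")
    case True
    then show ?thesis using newton by (simp add: m e_def R_def)
  next
    case False
    have IH: "e i = - coeff_b R i" if "1 \<le> i" "i \<le> n" for i
      using less.IH[of i] that by (simp add: m e_def R_def)
    have "(\<Sum>i\<le>n. e i * R (Suc n - i)) = R (Suc n) + (\<Sum>i=1..n. e i * R (Suc n - i))"
      by (simp add: e_def atMost_atLeast0 sum.atLeast_Suc_atMost)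
    also have "(\<Sum>i=1..n. e i * R (Suc n - i)) = - (\<Sum>i=1..n. R i * coeff_b R (Suc n - i))"
      by (subst sum.atLeastAtMost_rev)
         (auto simp: IH sum_negf[symmetric] Suc_diff_le intro!: sum.cong)
    finally have "e (Suc n) = - ((R (Suc n) - (\<Sum>i=1..n. R i * coeff_b R (Suc n - i))) / real (Suc n))"
      using newton by (simp add: field_simps)
    then show ?thesis using False by (simp add: m e_def R_def)
  qed
qed

lemma fps_of_poly_reflect_linear_factors:
  fixes x :: "'b \<Rightarrow> 'a::idom"
  shows "fps_of_poly (reflect_poly (\<Prod>j\<in>J. [:- x j, 1:])) = linear_factors_fps x J"
proof -
  have "fps_of_poly (reflect_poly [:- a, 1:]) = 1 - fps_const a * fps_X" for a :: 'a
    by (simp add: reflect_poly_def fps_of_poly_linear' flip: fps_const_neg)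
  then show ?thesis
    by (simp only: reflect_poly_prod fps_of_poly_prod linear_factors_fps_def)
qed

lemma coeff_prod_linear_factors:
  fixes x :: "'b \<Rightarrow> 'a::idom"
  assumes "finite J"
  shows "coeff (\<Prod>j\<in>J. [:- x j, 1:]) i =
           (if i \<le> card J then fps_nth (linear_factors_fps x J) (card J - i) else 0)"
proof -
  define P where "P = (\<Prod>j\<in>J. [:- x j, 1:])"
  have deg: "degree P = card J"
    using assms by (simp add: P_def degree_prod_eq_sum_degree)
  show ?thesis
  proof (cases "i \<le> card J")
    case True
    have "coeff P i = coeff (reflect_poly P) (card J - i)"
      using True by (simp add: coeff_reflect_poly deg)
    then show ?thesis
      using True by (simp flip: fps_of_poly_reflect_linear_factors add: P_def)
  next
    case False
    then show ?thesis using deg by (simp add: P_def coeff_eq_0)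
  qed
qed

definition companion_mat :: "nat \<Rightarrow> (nat \<Rightarrow> 'a::comm_ring_1) \<Rightarrow> 'a mat" where
  "companion_mat n c = mat n n (\<lambda>(i, j). if i < n - 1 then (if j = i + 1 then 1 else 0) else c j)"

lemma companion_mat_carrier [simp]: "companion_mat n c \<in> carrier_mat n n"
  by (simp add: companion_mat_def)

lemma char_poly_matrix_companion_mat:
  assumes "i < n" "j < n"
  shows "char_poly_matrix (companion_mat n c) $$ (i, j) =
           (if i = j then [:0, 1:] else 0) - (if i < n - 1 then (if j = i + 1 then 1 else 0) else [:c j:])"
  using assms by (auto simp: char_poly_matrix_def companion_mat_def one_pCons)

lemma mat_delete_char_poly_matrix_companion_mat_first:
  "mat_delete (char_poly_matrix (companion_mat (Suc (Suc m)) c)) 0 0 =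
     char_poly_matrix (companion_mat (Suc m) (\<lambda>j. c (Suc j)))"
  by (rule eq_matI) (auto simp: char_poly_matrix_def companion_mat_def mat_delete_def)

lemma det_mat_delete_char_poly_matrix_companion_mat_last:
  "det (mat_delete (char_poly_matrix (companion_mat (Suc n) c)) n 0) = (-1) ^ n"
proof -
  define M where "M = char_poly_matrix (companion_mat (Suc n) c)"
  define D where "D = mat_delete M n 0"
  have M: "M \<in> carrier_mat (Suc n) (Suc n)"
    by (simp add: M_def)
  then have D: "D \<in> carrier_mat n n"
    using mat_delete_carrier[OF M] by (simp add: D_def)
  have D_entry: "D $$ (i, j) = (if i = j then -1 else if i = Suc j then [:0, 1:] else 0)"
    if "i < n" "j < n" for i j
    using that M by (simp add: D_def mat_delete_def) (auto simp: M_def char_poly_matrix_companion_mat)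
  have "det D = prod_list (diag_mat D)"
    by (rule det_lower_triangular[OF _ D]) (simp add: D_entry)
  also have "\<dots> = (\<Prod>i<n. -1)"
    using D by (simp add: prod_list_diag_prod D_entry atLeast0LessThan)
  finally show ?thesis by (simp add: D_def M_def)
qed

lemma char_poly_companion_mat:
  "char_poly (companion_mat (Suc m) c) = monom 1 (Suc m) - (\<Sum>j\<le>m. monom (c j) j)"
proof (induction m arbitrary: c)
  case 0
  have "char_poly (companion_mat 1 c) = prod_list (diag_mat (char_poly_matrix (companion_mat 1 c)))"
    unfolding char_poly_def
    by (rule det_upper_triangular) (auto simp: char_poly_matrix_def companion_mat_def)
  then show ?case
    by (simp add: diag_mat_def char_poly_matrix_def companion_mat_def monom_Suc monom_0)
next
  case (Suc m)
  define A where "A = char_poly_matrix (companion_mat (Suc (Suc m)) c)"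
  have A: "A \<in> carrier_mat (Suc (Suc m)) (Suc (Suc m))"
    by (simp add: A_def)
  have A_col0: "A $$ (i, 0) = (if i = 0 then [:0, 1:] else if i = Suc m then - [:c 0:] else 0)"
    if "i < Suc (Suc m)" for i
    using that by (simp add: A_def char_poly_matrix_companion_mat)
  have "char_poly (companion_mat (Suc (Suc m)) c) = (\<Sum>i<Suc (Suc m). A $$ (i, 0) * cofactor A i 0)"
    unfolding char_poly_def A_def[symmetric] by (rule laplace_expansion_column[OF A]) simp
  also have "\<dots> = (\<Sum>i\<in>{0, Suc m}. A $$ (i, 0) * cofactor A i 0)"
    by (rule sum.mono_neutral_right) (auto simp: A_col0)
  also have "\<dots> = [:0, 1:] * cofactor A 0 0 - [:c 0:] * cofactor A (Suc m) 0"
    by (simp add: A_col0)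
  also have "\<dots> = pCons 0 (monom 1 (Suc m) - (\<Sum>j\<le>m. monom (c (Suc j)) j)) - [:c 0:]"
    by (simp add: cofactor_def A_def mat_delete_char_poly_matrix_companion_mat_first
        det_mat_delete_char_poly_matrix_companion_mat_last Suc.IH[unfolded char_poly_def] flip: power_add)
  also have "\<dots> = monom 1 (Suc (Suc m)) - (\<Sum>j\<le>Suc m. monom (c j) j)"
  proof -
    have "(\<Sum>j\<le>Suc m. monom (c j) j) = [:c 0:] + pCons 0 (\<Sum>j\<le>m. monom (c (Suc j)) j)"
      by (simp only: sum.atMost_Suc_shift pCons_0_hom.hom_sum monom_Suc monom_0)
    then show ?thesis
      by (simp only: pCons_0_hom.hom_minus monom_Suc[of 1 "Suc m", symmetric] diff_diff_eq add.commute)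
  qed
  finally show ?case .
qed

lemma char_poly_companion_mat_power_sum:
  assumes "1 \<le> k"
  shows "char_poly (companion_mat k (\<lambda>j. coeff_a k (power_sum k r) (Suc j))) =
           (\<Prod>j\<in>{1..k}. [:- r j, 1:])"
proof (rule poly_eqI)
  fix i
  obtain m where k: "k = Suc m" using assms by (cases k) auto
  have "coeff (char_poly (companion_mat k (\<lambda>j. coeff_a k (power_sum k r) (Suc j)))) i =
      (if i = k then 1 else 0) - (if i < k then coeff_b (power_sum k r) (k - i) else 0)"
    by (simp add: k char_poly_companion_mat coeff_sum coeff_a_def del: coeff_b.simps)
  also have "\<dots> = (if i \<le> k then fps_nth (linear_factors_fps r {1..k}) (k - i) else 0)"
    using linear_factors_fps_nth_eq_coeff_b[of "k - i" r k] by auto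
  also have "\<dots> = coeff (\<Prod>j\<in>{1..k}. [:- r j, 1:]) i"
    by (simp add: coeff_prod_linear_factors)
  finally show "coeff (char_poly (companion_mat k (\<lambda>j. coeff_a k (power_sum k r) (Suc j)))) i =
      coeff (\<Prod>j\<in>{1..k}. [:- r j, 1:]) i" .
qed

lemma companion_A_eq_mat_hom:
  "companion_A k R = of_real_hom.mat_hom (companion_mat k (\<lambda>j. coeff_a k R (Suc j)))"
  by (rule eq_matI) (auto simp: companion_A_def companion_mat_def)

lemma char_poly_companion_A_power_sum:
  assumes "1 \<le> k"
  shows "char_poly (companion_A k (power_sum k r)) = (\<Prod>j\<in>{1..k}. [:- complex_of_real (r j), 1:])"
proof -
  interpret of_real_poly_hom: map_poly_comm_ring_hom "of_real :: real \<Rightarrow> complex" ..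
  have "char_poly (companion_A k (power_sum k r)) =
      map_poly of_real (char_poly (companion_mat k (\<lambda>j. coeff_a k (power_sum k r) (Suc j))))"
    unfolding companion_A_eq_mat_hom by (rule of_real_hom.char_poly_hom[OF companion_mat_carrier])
  also have "\<dots> = map_poly of_real (\<Prod>j\<in>{1..k}. [:- r j, 1:])"
    by (simp only: char_poly_companion_mat_power_sum[OF assms])
  also have "\<dots> = (\<Prod>j\<in>{1..k}. [:- complex_of_real (r j), 1:])"
    by (simp add: of_real_poly_hom.hom_prod)
  finally show ?thesis .
qed

lemma eigenvalue_mset_eq_proots:
  assumes "char_poly A \<noteq> 0"
  shows "eigenvalue_mset A = proots (char_poly A)"
proof -
  have "(\<lambda>x. order x (char_poly A)) = count (proots (char_poly A))"
    using assms by (simp add: fun_eq_iff)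
  then show ?thesis
    by (simp add: eigenvalue_mset_def count_inverse)
qed

lemma eigenvalue_mset_companion_A_power_sum:
  assumes "1 \<le> k"
  shows "eigenvalue_mset (companion_A k (power_sum k r)) =
           image_mset (\<lambda>j. complex_of_real (r j)) (mset_set {1..k})"
proof -
  have "(\<Prod>j\<in>{1..k}. [:- complex_of_real (r j), 1:]) \<noteq> 0"
    by simp
  then show ?thesis
    by (simp add: eigenvalue_mset_eq_proots char_poly_companion_A_power_sum[OF assms] proots_prod
        sum_unfold_sum_mset)
qed

lemma jth_largest_eig_modulus_companion_A_power_sum:
  assumes j: "1 \<le> j" "j \<le> k"
    and dec: "\<And>i j. 1 \<le> i \<Longrightarrow> i \<le> j \<Longrightarrow> j \<le> k \<Longrightarrow> r j \<le> r i"
    and nonneg: "\<And>j. 1 \<le> j \<Longrightarrow> j \<le> k \<Longrightarrow> 0 \<le> r j"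
  shows "jth_largest_eig_modulus (companion_A k (power_sum k r)) j = r j"
proof -
  define xs where "xs = map r [1..<Suc k]"
  have "image_mset cmod (eigenvalue_mset (companion_A k (power_sum k r))) =
      image_mset r (mset_set {1..k})"
    using j nonneg
    by (auto simp: eigenvalue_mset_companion_A_power_sum multiset.map_comp intro!: image_mset_cong)
  also have "\<dots> = mset xs"
    by (simp add: xs_def mset_upt atLeastLessThanSuc_atLeastAtMost del: upt_Suc)
  finally have moduli: "image_mset cmod (eigenvalue_mset (companion_A k (power_sum k r))) = mset xs" .
  have "sorted (rev xs)"
    unfolding sorted_iff_nth_mono
    by (auto simp: xs_def rev_nth nth_map_upt Suc_diff_Suc intro!: dec simp del: upt_Suc)
  then have "sort xs = rev xs"
    by (intro properties_for_sort) simp_all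
  then have "eigen_moduli_desc (companion_A k (power_sum k r)) = xs"
    by (simp add: eigen_moduli_desc_def moduli)
  then show ?thesis
    using j by (simp add: jth_largest_eig_modulus_def xs_def nth_map_upt del: upt_Suc)
qed

lemma coeff_b_cong:
  assumes "\<And>i. 1 \<le> i \<Longrightarrow> i \<le> n \<Longrightarrow> R i = R' i"
  shows "coeff_b R n = coeff_b R' n"
  using assms
proof (induction n rule: less_induct)
  case (less n)
  show ?case
  proof (cases n)
    case (Suc m)
    have "coeff_b R (Suc m - i) = coeff_b R' (Suc m - i)" if "1 \<le> i" "i \<le> m" for i
      using less that Suc by simp
    then have "(\<Sum>i=1..m. R i * coeff_b R (Suc m - i)) = (\<Sum>i=1..m. R' i * coeff_b R' (Suc m - i))"
      using less.prems Suc by (intro sum.cong) simp_all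
    then show ?thesis
      using less.prems Suc by simp
  qed simp
qed

lemma companion_A_cong:
  assumes "\<And>i. 1 \<le> i \<Longrightarrow> i \<le> k \<Longrightarrow> R i = R' i"
  shows "companion_A k R = companion_A k R'"
  unfolding companion_A_def coeff_a_def
  by (rule eq_matI) (auto intro!: coeff_b_cong assms)

lemma inv_M2_moment_t:
  assumes "1 \<le> n"
  shows "inv_M2 (moment_t R) n = R n"
  using assms
proof (induction n rule: less_induct)
  case (less n)
  define t where "t = moment_t R"
  obtain m where n: "n = Suc m" using less.prems by (cases n) auto
  show ?case
  proof (cases "m = 0")
    case True
    then show ?thesis by (simp add: n)
  next
    case False
    have IH: "inv_M2 t j = R j" if "1 \<le> j" "j \<le> m" for j
      using less.IH[of j] that by (simp add: n t_def)
    have t_Suc: "t (Suc m) =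
        (\<Sum>j=1..Suc m. fact m / fact (Suc m - j) * 2 ^ (j - 1) * R j * t (Suc m - j))"
      by (simp add: t_def)
    have "t (Suc m) / (fact m * 2 ^ m) =
        (\<Sum>j=1..Suc m. R j * t (Suc m - j) / (fact (Suc m - j) * 2 ^ (Suc m - j)))"
      unfolding t_Suc sum_divide_distrib
    proof (rule sum.cong[OF refl])
      fix j assume j: "j \<in> {1..Suc m}"
      then have split_power: "(2::real) ^ m = 2 ^ (j - 1) * 2 ^ (Suc m - j)"
        by (simp flip: power_add)
      show "fact m / fact (Suc m - j) * 2 ^ (j - 1) * R j * t (Suc m - j) / (fact m * 2 ^ m) =
          R j * t (Suc m - j) / (fact (Suc m - j) * 2 ^ (Suc m - j))"
        unfolding split_power by (simp add: field_simps)
    qed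
    also have "\<dots> = (\<Sum>j=1..m. R j * t (Suc m - j) / (fact (Suc m - j) * 2 ^ (Suc m - j))) + R (Suc m)"
      by (simp add: t_def)
    finally have "R (Suc m) = t (Suc m) / (fact m * 2 ^ m) -
        (\<Sum>j=1..m. t (Suc m - j) * inv_M2 t j / (fact (Suc m - j) * 2 ^ (Suc m - j)))"
      using IH by (simp add: mult.commute)
    then show ?thesis
      using False by (simp add: n t_def)
  qed
qed

theorem proposition2:
  fixes k :: nat and r :: "nat \<Rightarrow> real"
  assumes "k \<ge> 1"
    and dec: "\<And>i j. 1 \<le> i \<Longrightarrow> i \<le> j \<Longrightarrow> j \<le> k \<Longrightarrow> r j \<le> r i"
    and nonneg: "\<And>j. 1 \<le> j \<Longrightarrow> j \<le> k \<Longrightarrow> r j \<ge> 0"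
  shows "(\<forall>r'. (\<forall>i j. 1 \<le> i \<longrightarrow> i \<le> j \<longrightarrow> j \<le> k \<longrightarrow> r' j \<le> r' i)
              \<longrightarrow> (\<forall>j. 1 \<le> j \<longrightarrow> j \<le> k \<longrightarrow> r' j \<ge> 0)
              \<longrightarrow> (\<forall>\<tau>. 1 \<le> \<tau> \<longrightarrow> \<tau> \<le> k \<longrightarrow> power_sum k r' \<tau> = power_sum k r \<tau>)
              \<longrightarrow> (\<forall>j. 1 \<le> j \<longrightarrow> j \<le> k \<longrightarrow> r' j = r j))
    \<and> (\<forall>j. 1 \<le> j \<longrightarrow> j \<le> k \<longrightarrow>
          r j = jth_largest_eig_modulus (companion_A k (power_sum k r)) j)
    \<and> (\<forall>\<tau>. 1 \<le> \<tau> \<longrightarrow> \<tau> \<le> k \<longrightarrow>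
          power_sum k r \<tau> = inv_M2 (moment_t (power_sum k r)) \<tau>)"
proof (intro conjI allI impI)
  fix j assume "1 \<le> j" "j \<le> k"
  then show "r j = jth_largest_eig_modulus (companion_A k (power_sum k r)) j"
    using jth_largest_eig_modulus_companion_A_power_sum[OF _ _ dec nonneg] by simp
next
  fix \<tau> :: nat assume "1 \<le> \<tau>"
  then show "power_sum k r \<tau> = inv_M2 (moment_t (power_sum k r)) \<tau>"
    by (simp add: inv_M2_moment_t)
next
  fix r' :: "nat \<Rightarrow> real" and j
  assume dec': "\<forall>i j. 1 \<le> i \<longrightarrow> i \<le> j \<longrightarrow> j \<le> k \<longrightarrow> r' j \<le> r' i"
    and nonneg': "\<forall>j. 1 \<le> j \<longrightarrow> j \<le> k \<longrightarrow> r' j \<ge> 0"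
    and same_power_sums: "\<forall>\<tau>. 1 \<le> \<tau> \<longrightarrow> \<tau> \<le> k \<longrightarrow> power_sum k r' \<tau> = power_sum k r \<tau>"
    and j: "1 \<le> j" "j \<le> k"
  have "r' j = jth_largest_eig_modulus (companion_A k (power_sum k r')) j"
    by (rule jth_largest_eig_modulus_companion_A_power_sum[OF j, symmetric]) (use dec' nonneg' in auto)
  also have "companion_A k (power_sum k r') = companion_A k (power_sum k r)"
    using same_power_sums by (intro companion_A_cong) simp
  also have "jth_largest_eig_modulus (companion_A k (power_sum k r)) j = r j"
    by (rule jth_largest_eig_modulus_companion_A_power_sum[OF j dec nonneg])
  finally show "r' j = r j" .
qed

end
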